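(* Let $A$ be the filtered boundary matrix of a Morse decomposition with respect to an admissible enumeration $\sigma_1,\dots,\sigma_n$, let $A_{out}$ be the matrix obtained after the reduction phase of ConMat, and let $\bar A$ be any complete column reduction of $A_{out}$. Then for every $j$, column $j$ is homogeneous in $A_{out}$ if and only if column $j$ is homogeneous in $\bar A$.
   Context: $K$ is a finite simplicial complex ($\tau\le\sigma$: $\tau$ is a face of $\sigma$; $\mathrm{cl}(\sigma)=\{\tau:\tau\le\sigma\}$). A multivector field $\mathcal V$ on $K$ is a partition of $K$ into convex sets $V$ (if $\sigma,\tau\in V$ and $\sigma\le\mu\le\tau$ then $\mu\in V$); $[\sigma]_{\mathcal V}$ is the part containing $\sigma$, $F_{\mathcal V}(\sigma)=[\sigma]_{\mathcal V}\cup\mathrm{cl}(\sigma)$, and a path is a sequence $\sigma_1,\dots,\sigma_r$ with $\sigma_k\in F_{\mathcal V}(\sigma_{k-1})$. A Morse decomposition indexed by a finite poset $(P,\le_P)$ is a partition $K=\bigsqcup_{p\in P}M_p$ such that every path from $M_p$ to $M_q$ has $q\le_P p$; $[\sigma]_P$ is the $p$ with $\sigma\in M_p$. An admissible enumeration is $\sigma_1,\dots,\sigma_n$ of all simplices of $K$ such that (a) for some linear extension $\le_{lin}$ of $\le_P$, $i\le j\Rightarrow[\sigma_i]_P\le_{lin}[\sigma_j]_P$; (b) if $\sigma_i$ is a proper face of $\sigma_j$ then $i<j$. The filtered boundary matrix $A$ is the $n\times n$ $\mathbb Z_2$-matrix with $A[i,j]=1$ iff $\sigma_i$ is a codimension-one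 face of $\sigma_j$; row/column $i$ represents $\sigma_i$ (in all matrices derived from $A$ by column additions). For a nonzero column $j$ of a matrix $B$, $\mathrm{low}_B(j)$ is the largest $i$ with $B[i,j]=1$. Column $j$ is homogeneous in $B$ if it is nonzero and $\sigma_j$, $\sigma_{\mathrm{low}_B(j)}$ lie in the same Morse set. ConMat reduction phase on $A$ (in place): for $j=1,\dots,n$: for $i=\mathrm{low}_A(j)$ down to $1$: if $A[i,j]=1$ and some column $s<j$ of the current matrix is homogeneous with $\mathrm{low}_A(s)=i$, add column $s$ to column $j$ (mod 2). $A_{out}$ is the result. A complete column reduction of a matrix $B$ is a matrix $\bar B$ obtained from $B$ by a finite sequence of additions of a column $s$ to a column $j$ with $s<j$ (no homogeneity restriction) such that distinct nonzero columns of $\bar B$ have distinct values of $\mathrm{low}$. *)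

theory Defs
  imports Main
begin

definition simplicial_complex :: "'v set set \<Rightarrow> bool" where
  "simplicial_complex K \<longleftrightarrow> finite K \<and> (\<forall>\<sigma>\<in>K. finite \<sigma> \<and> \<sigma> \<noteq> {}) \<and>
     (\<forall>\<sigma>\<in>K. \<forall>\<tau>. \<tau> \<noteq> {} \<and> \<tau> \<subseteq> \<sigma> \<longrightarrow> \<tau> \<in> K)"

definition cl :: "'v set set \<Rightarrow> 'v set \<Rightarrow> 'v set set" where
  "cl K \<sigma> = {\<tau>\<in>K. \<tau> \<subseteq> \<sigma>}"

definition codim1_face :: "'v set \<Rightarrow> 'v set \<Rightarrow> bool" where
  "codim1_face \<tau> \<sigma> \<longleftrightarrow> \<tau> \<subseteq> \<sigma> \<and> card \<sigma> = card \<tau> + 1"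

definition convex_in :: "'v set set \<Rightarrow> 'v set set \<Rightarrow> bool" where
  "convex_in K V \<longleftrightarrow> (\<forall>\<sigma>\<in>V. \<forall>\<tau>\<in>V. \<forall>\<mu>\<in>K. \<sigma> \<subseteq> \<mu> \<and> \<mu> \<subseteq> \<tau> \<longrightarrow> \<mu> \<in> V)"

definition multivector_field :: "'v set set \<Rightarrow> 'v set set set \<Rightarrow> bool" where
  "multivector_field K \<V> \<longleftrightarrow>
     (\<forall>V\<in>\<V>. V \<noteq> {} \<and> V \<subseteq> K \<and> convex_in K V) \<and> \<Union>\<V> = K \<and>
     (\<forall>V\<in>\<V>. \<forall>W\<in>\<V>. V \<noteq> W \<longrightarrow> V \<inter> W = {})"

definition mv_class :: "'v set set set \<Rightarrow> 'v set \<Rightarrow> 'v set set" where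
  "mv_class \<V> \<sigma> = (THE V. V \<in> \<V> \<and> \<sigma> \<in> V)"

definition F_mv :: "'v set set \<Rightarrow> 'v set set set \<Rightarrow> 'v set \<Rightarrow> 'v set set" where
  "F_mv K \<V> \<sigma> = mv_class \<V> \<sigma> \<union> cl K \<sigma>"

definition mv_path :: "'v set set \<Rightarrow> 'v set set set \<Rightarrow> 'v set list \<Rightarrow> bool" where
  "mv_path K \<V> xs \<longleftrightarrow> xs \<noteq> [] \<and> set xs \<subseteq> K \<and>
     (\<forall>k. Suc k < length xs \<longrightarrow> xs ! Suc k \<in> F_mv K \<V> (xs ! k))"

definition partial_order_on' :: "'p set \<Rightarrow> ('p \<Rightarrow> 'p \<Rightarrow> bool) \<Rightarrow> bool" where
  "partial_order_on' P le \<longleftrightarrow> (\<forall>p\<in>P. le p p) \<and>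
     (\<forall>p\<in>P. \<forall>q\<in>P. le p q \<and> le q p \<longrightarrow> p = q) \<and>
     (\<forall>p\<in>P. \<forall>q\<in>P. \<forall>r\<in>P. le p q \<and> le q r \<longrightarrow> le p r)"

definition linear_extension :: "'p set \<Rightarrow> ('p \<Rightarrow> 'p \<Rightarrow> bool) \<Rightarrow> ('p \<Rightarrow> 'p \<Rightarrow> bool) \<Rightarrow> bool" where
  "linear_extension P le lin \<longleftrightarrow> partial_order_on' P lin \<and>
     (\<forall>p\<in>P. \<forall>q\<in>P. lin p q \<or> lin q p) \<and> (\<forall>p\<in>P. \<forall>q\<in>P. le p q \<longrightarrow> lin p q)"

definition morse_decomposition ::
  "'v set set \<Rightarrow> 'v set set set \<Rightarrow> 'p set \<Rightarrow> ('p \<Rightarrow> 'p \<Rightarrow> bool) \<Rightarrow> ('p \<Rightarrow> 'v set set) \<Rightarrow> bool" where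
  "morse_decomposition K \<V> P le M \<longleftrightarrow>
     finite P \<and> partial_order_on' P le \<and>
     (\<forall>p\<in>P. M p \<subseteq> K) \<and> (\<Union>p\<in>P. M p) = K \<and>
     (\<forall>p\<in>P. \<forall>q\<in>P. p \<noteq> q \<longrightarrow> M p \<inter> M q = {}) \<and>
     (\<forall>xs p q. mv_path K \<V> xs \<and> p \<in> P \<and> q \<in> P \<and> hd xs \<in> M p \<and> last xs \<in> M q \<longrightarrow> le q p)"

definition admissible_enumeration ::
  "'v set set \<Rightarrow> 'p set \<Rightarrow> ('p \<Rightarrow> 'p \<Rightarrow> bool) \<Rightarrow> ('p \<Rightarrow> 'v set set) \<Rightarrow> nat \<Rightarrow> (nat \<Rightarrow> 'v set) \<Rightarrow> bool" where
  "admissible_enumeration K P le M n \<sigma> \<longleftrightarrow>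
     bij_betw \<sigma> {1..n} K \<and>
     (\<exists>lin. linear_extension P le lin \<and>
        (\<forall>i\<in>{1..n}. \<forall>j\<in>{1..n}. \<forall>p\<in>P. \<forall>q\<in>P.
            i \<le> j \<and> \<sigma> i \<in> M p \<and> \<sigma> j \<in> M q \<longrightarrow> lin p q)) \<and>
     (\<forall>i\<in>{1..n}. \<forall>j\<in>{1..n}. \<sigma> i \<subset> \<sigma> j \<longrightarrow> i < j)"

text \<open>An n x n matrix over Z2 is a function nat => nat => bool, with rows/columns
  indexed by 1..n (entries outside are False for all matrices considered).\<close>
type_synonym z2mat = "nat \<Rightarrow> nat \<Rightarrow> bool"

definition boundary_matrix :: "nat \<Rightarrow> (nat \<Rightarrow> 'v set) \<Rightarrow> z2mat" where
  "boundary_matrix n \<sigma> = (\<lambda>i j. i \<in> {1..n} \<and> j \<in> {1..n} \<and> codim1_face (\<sigma> i) (\<sigma> j))"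

definition nonzero_col :: "nat \<Rightarrow> z2mat \<Rightarrow> nat \<Rightarrow> bool" where
  "nonzero_col n B j \<longleftrightarrow> (\<exists>i\<in>{1..n}. B i j)"

text \<open>low of a nonzero column; (arbitrarily) 0 for a zero column.\<close>
definition low :: "nat \<Rightarrow> z2mat \<Rightarrow> nat \<Rightarrow> nat" where
  "low n B j = (if nonzero_col n B j then Max {i\<in>{1..n}. B i j} else 0)"

definition homogeneous ::
  "nat \<Rightarrow> (nat \<Rightarrow> 'v set) \<Rightarrow> 'p set \<Rightarrow> ('p \<Rightarrow> 'v set set) \<Rightarrow> z2mat \<Rightarrow> nat \<Rightarrow> bool" where
  "homogeneous n \<sigma> P M B j \<longleftrightarrow> nonzero_col n B j \<and>
     (\<exists>p\<in>P. \<sigma> j \<in> M p \<and> \<sigma> (low n B j) \<in> M p)"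

definition add_col :: "z2mat \<Rightarrow> nat \<Rightarrow> nat \<Rightarrow> z2mat" where
  "add_col B s j = (\<lambda>i k. if k = j then (B i j \<noteq> B i s) else B i k)"

text \<open>Inner loop for column j: rows i, i-1, ..., 1. The choice of the column s is
  left nondeterministic ("some column s"); every possible run is covered.\<close>
inductive conmat_inner ::
  "nat \<Rightarrow> (nat \<Rightarrow> 'v set) \<Rightarrow> 'p set \<Rightarrow> ('p \<Rightarrow> 'v set set) \<Rightarrow> nat \<Rightarrow> z2mat \<Rightarrow> nat \<Rightarrow> z2mat \<Rightarrow> bool"
  for n \<sigma> P M j where
  row0: "conmat_inner n \<sigma> P M j B 0 B"
| skip: "\<not> (B (Suc i) j \<and> (\<exists>s. 1 \<le> s \<and> s < j \<and> homogeneous n \<sigma> P M B s \<and> low n B s = Suc i))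
         \<Longrightarrow> conmat_inner n \<sigma> P M j B i B' \<Longrightarrow> conmat_inner n \<sigma> P M j B (Suc i) B'"
| add: "B (Suc i) j \<Longrightarrow> 1 \<le> s \<Longrightarrow> s < j \<Longrightarrow> homogeneous n \<sigma> P M B s \<Longrightarrow> low n B s = Suc i
         \<Longrightarrow> conmat_inner n \<sigma> P M j (add_col B s j) i B' \<Longrightarrow> conmat_inner n \<sigma> P M j B (Suc i) B'"

inductive conmat_outer ::
  "nat \<Rightarrow> (nat \<Rightarrow> 'v set) \<Rightarrow> 'p set \<Rightarrow> ('p \<Rightarrow> 'v set set) \<Rightarrow> z2mat \<Rightarrow> nat \<Rightarrow> z2mat \<Rightarrow> bool"
  for n \<sigma> P M where
  finished: "n < j \<Longrightarrow> conmat_outer n \<sigma> P M B j B"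
| process: "j \<le> n \<Longrightarrow> conmat_inner n \<sigma> P M j B (low n B j) B1 \<Longrightarrow> conmat_outer n \<sigma> P M B1 (Suc j) B'
         \<Longrightarrow> conmat_outer n \<sigma> P M B j B'"

definition conmat_reduction ::
  "nat \<Rightarrow> (nat \<Rightarrow> 'v set) \<Rightarrow> 'p set \<Rightarrow> ('p \<Rightarrow> 'v set set) \<Rightarrow> z2mat \<Rightarrow> z2mat \<Rightarrow> bool" where
  "conmat_reduction n \<sigma> P M A Aout \<longleftrightarrow> conmat_outer n \<sigma> P M A 1 Aout"

definition col_add_step :: "nat \<Rightarrow> z2mat \<Rightarrow> z2mat \<Rightarrow> bool" where
  "col_add_step n B B' \<longleftrightarrow> (\<exists>s j. 1 \<le> s \<and> s < j \<and> j \<le> n \<and> B' = add_col B s j)"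

definition reduced :: "nat \<Rightarrow> z2mat \<Rightarrow> bool" where
  "reduced n B \<longleftrightarrow> (\<forall>j\<in>{1..n}. \<forall>k\<in>{1..n}. j \<noteq> k \<and> nonzero_col n B j \<and> nonzero_col n B k
      \<longrightarrow> low n B j \<noteq> low n B k)"

definition complete_column_reduction :: "nat \<Rightarrow> z2mat \<Rightarrow> z2mat \<Rightarrow> bool" where
  "complete_column_reduction n B Bbar \<longleftrightarrow> (col_add_step n)\<^sup>*\<^sup>* B Bbar \<and> reduced n Bbar"

end

theory Submission
  imports Defs
begin

(* Let the block part of a matrix keep only the entries whose row and column simplices lie in
   the same Morse set.  Since Morse sets are intervals of an admissible enumeration, a column of
   a strictly upper triangular matrix is homogeneous iff its block part is nonzero, and a
   left-to-right column addition acts on block parts either trivially or as the same addition.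
   After the ConMat phase no entry of a column is the low of an earlier homogeneous column, so
   the homogeneous columns of A_out have distinct lows and the block part of A_out is reduced;
   the block part of the reduced matrix A_bar is reduced as well.  Two reduced matrices related
   by left-to-right column additions have the same nonzero columns (uniqueness of pivots),
   which, applied to the two block parts, gives the claim.  Of the hypotheses on K, only the
   partition property of the Morse sets and the order compatibility of the enumeration enter. *)

lemma odd_card_sym_diff:
  assumes "finite A" "finite B"
  shows "odd (card (sym_diff A B)) \<longleftrightarrow> odd (card A) \<noteq> odd (card B)"
proof -
  have sym_diff_eq: "sym_diff A B = (A \<union> B) - (A \<inter> B)" by blast
  have "card (sym_diff A B) = card (A \<union> B) - card (A \<inter> B)"
    unfolding sym_diff_eq using assms by (intro card_Diff_subset) auto
  moreover have "card (A \<union> B) + card (A \<inter> B) = card A + card B"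
    using assms by (rule card_Un_Int[symmetric])
  moreover have "card (A \<inter> B) \<le> card (A \<union> B)"
    using assms by (intro card_mono) auto
  ultimately have "card (sym_diff A B) + 2 * card (A \<inter> B) = card A + card B"
    by linarith
  then show ?thesis by presburger
qed

lemma nonzero_col_low_ge:
  assumes "x \<in> {1..n}" "B x k"
  shows "nonzero_col n B k \<and> x \<le> low n B k"
  using assms by (auto simp: nonzero_col_def low_def)

lemma low_entry:
  assumes "nonzero_col n B k"
  shows "B (low n B k) k \<and> low n B k \<in> {1..n}"
proof -
  have "{i\<in>{1..n}. B i k} \<noteq> {}" using assms by (auto simp: nonzero_col_def)
  then have "Max {i\<in>{1..n}. B i k} \<in> {i\<in>{1..n}. B i k}" by (intro Max_in) auto
  then show ?thesis using assms by (simp add: low_def)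
qed

lemma low_eqI:
  assumes "x \<in> {1..n}" "B x k" "\<And>y. y \<in> {1..n} \<Longrightarrow> B y k \<Longrightarrow> y \<le> x"
  shows "low n B k = x"
  using assms nonzero_col_low_ge[where B = B, OF assms(1,2)] low_entry[of n B k]
  by (meson le_antisym)

lemma low_cong:
  assumes "\<And>x. B' x k = B x k"
  shows "nonzero_col n B' k = nonzero_col n B k" "low n B' k = low n B k"
  using assms by (simp_all add: nonzero_col_def low_def)

definition col_sum :: "z2mat \<Rightarrow> nat set \<Rightarrow> nat \<Rightarrow> bool" where
  "col_sum B S x \<longleftrightarrow> odd (card {t\<in>S. B x t})"

lemma col_sum_sym_diff:
  assumes "finite S" "finite T"
  shows "col_sum B (sym_diff S T) x \<longleftrightarrow> col_sum B S x \<noteq> col_sum B T x"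
proof -
  have "{t \<in> sym_diff S T. B x t} = sym_diff {t\<in>S. B x t} {t\<in>T. B x t}" by blast
  then show ?thesis using assms by (simp add: col_sum_def odd_card_sym_diff)
qed

lemma col_add_steps_col_sum:
  assumes "(col_add_step n)\<^sup>*\<^sup>* B B'" "1 \<le> k"
  shows "\<exists>S. finite S \<and> k \<in> S \<and> S \<subseteq> {1..k} \<and> (\<forall>x. B' x k = col_sum B S x)"
  using assms
proof (induction arbitrary: k rule: rtranclp_induct)
  case base
  have "{t\<in>{k}. B x t} = (if B x k then {k} else {})" for x by auto
  then have "B x k = col_sum B {k} x" for x by (simp add: col_sum_def)
  then show ?case using base by (intro exI[of _ "{k}"]) auto
next
  case (step B1 B2)
  obtain s j where sj: "1 \<le> s" "s < j" and B2: "B2 = add_col B1 s j"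
    using step.hyps(2) by (auto simp: col_add_step_def)
  show ?case
  proof (cases "k = j")
    case False
    then show ?thesis using step.IH[OF step.prems] by (simp add: B2 add_col_def)
  next
    case True
    obtain Sj where Sj: "finite Sj" "j \<in> Sj" "Sj \<subseteq> {1..j}" "\<forall>x. B1 x j = col_sum B Sj x"
      using step.IH[OF step.prems] True by blast
    obtain Ss where Ss: "finite Ss" "s \<in> Ss" "Ss \<subseteq> {1..s}" "\<forall>x. B1 x s = col_sum B Ss x"
      using step.IH[OF sj(1)] by blast
    have "j \<notin> Ss" using Ss(3) sj(2) by auto
    then show ?thesis
      using Sj Ss sj True
      by (intro exI[of _ "sym_diff Sj Ss"]) (auto simp: B2 add_col_def col_sum_sym_diff)
  qed
qed

lemma reduced_low_inj:
  assumes "reduced n B" "j \<in> {1..n}" "k \<in> {1..n}" "nonzero_col n B j" "nonzero_col n B k"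
    and "low n B j = low n B k"
  shows "j = k"
  using assms unfolding reduced_def by blast

text \<open>Reducedness makes the largest low among the summands unique, so it survives in the sum.\<close>
lemma low_col_sum:
  assumes "reduced n B" "finite S" "S \<subseteq> {1..n}" "t0 \<in> S" "nonzero_col n B t0"
    and max: "\<And>t. t \<in> S \<Longrightarrow> nonzero_col n B t \<Longrightarrow> low n B t \<le> low n B t0"
    and B': "\<And>x. B' x k = col_sum B S x"
  shows "nonzero_col n B' k \<and> low n B' k = low n B t0"
proof -
  define m where "m = low n B t0"
  have m: "m \<in> {1..n}" "B m t0" using low_entry[OF assms(5)] by (auto simp: m_def)
  have "{t\<in>S. B m t} = {t0}"
  proof (intro equalityI subsetI)
    fix t assume "t \<in> {t\<in>S. B m t}"
    then have t: "t \<in> S" "B m t" by auto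
    have nz: "nonzero_col n B t" and "m \<le> low n B t"
      using nonzero_col_low_ge[of m n B t] m(1) t(2) by auto
    moreover have "low n B t \<le> m" using max[OF t(1) nz] by (simp add: m_def)
    ultimately have "low n B t = low n B t0" by (simp add: m_def)
    moreover have "t \<in> {1..n}" "t0 \<in> {1..n}" using assms(3,4) t(1) by auto
    ultimately show "t \<in> {t0}" using reduced_low_inj[OF assms(1) _ _ nz assms(5)] by simp
  qed (use assms(4) m in auto)
  then have "B' m k" using B' by (simp add: col_sum_def)
  moreover have "y \<le> m" if "y \<in> {1..n}" "B' y k" for y
  proof -
    have "{t\<in>S. B y t} \<noteq> {}"
      using B'[of y] that(2) by (intro notI) (simp add: col_sum_def)
    then obtain t where t: "t \<in> S" "B y t" by blast
    then have "nonzero_col n B t" "y \<le> low n B t"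
      using nonzero_col_low_ge[of y n B t] that(1) by auto
    then show ?thesis using max[OF t(1)] by (simp add: m_def)
  qed
  ultimately show ?thesis
    using m(1) nonzero_col_low_ge[of m n B' k] low_eqI[of m n B' k] by (simp add: m_def)
qed

lemma reduced_col_add_steps_same_pivots:
  assumes "reduced n B" "reduced n B'" "(col_add_step n)\<^sup>*\<^sup>* B B'" "k \<in> {1..n}"
  shows "nonzero_col n B' k = nonzero_col n B k \<and> low n B' k = low n B k"
  using assms(4)
proof (induction k rule: less_induct)
  case (less k)
  obtain S where S: "finite S" "k \<in> S" "S \<subseteq> {1..k}" and B': "\<And>x. B' x k = col_sum B S x"
    using col_add_steps_col_sum[OF assms(3), of k] less.prems by auto
  have Sn: "S \<subseteq> {1..n}" using S(3) less.prems by auto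
  show ?case
  proof (cases "\<exists>t\<in>S. nonzero_col n B t")
    case False
    have "\<not> B' x k" if "x \<in> {1..n}" for x
    proof -
      have "{t\<in>S. B x t} = {}" using False nonzero_col_low_ge[OF that] by blast
      then have "card {t\<in>S. B x t} = 0" by (simp only: card.empty)
      then show ?thesis by (simp add: B' col_sum_def)
    qed
    then show ?thesis using False S(2) by (auto simp: nonzero_col_def low_def)
  next
    case True
    define H where "H = {t\<in>S. nonzero_col n B t}"
    have "Max (low n B ` H) \<in> low n B ` H" using True S(1) by (intro Max_in) (auto simp: H_def)
    then obtain t0 where t0: "t0 \<in> S" "nonzero_col n B t0" "low n B t0 = Max (low n B ` H)"
      by (auto simp: H_def)
    have "low n B t \<le> low n B t0" if "t \<in> S" "nonzero_col n B t" for t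
      using that S(1) t0(3) by (auto simp: H_def)
    then have k: "nonzero_col n B' k \<and> low n B' k = low n B t0"
      using low_col_sum[OF assms(1) S(1) Sn t0(1,2)] B' by blast
    have "t0 = k"
    proof (rule ccontr)
      assume "t0 \<noteq> k"
      then have "t0 < k" "t0 \<in> {1..n}" using t0(1) S(3) Sn by auto
      then have "nonzero_col n B' t0 \<and> low n B' t0 = low n B t0"
        using less.IH t0(2) by auto
      then have "t0 = k" using reduced_low_inj[OF assms(2) \<open>t0 \<in> {1..n}\<close> less.prems] k by auto
      with \<open>t0 \<noteq> k\<close> show False ..
    qed
    then show ?thesis using k t0 by auto
  qed
qed

definition strictly_upper_triangular :: "nat \<Rightarrow> z2mat \<Rightarrow> bool" where
  "strictly_upper_triangular n B \<longleftrightarrow> (\<forall>x k. B x k \<longrightarrow> 1 \<le> x \<and> x < k \<and> k \<le> n)"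

lemma strictly_upper_triangularD:
  "strictly_upper_triangular n B \<Longrightarrow> B x k \<Longrightarrow> 1 \<le> x \<and> x < k \<and> k \<le> n"
  by (simp add: strictly_upper_triangular_def)

lemma strictly_upper_triangular_add_col:
  assumes "strictly_upper_triangular n B" "1 \<le> s" "s < j" "j \<le> n"
  shows "strictly_upper_triangular n (add_col B s j)"
  using assms unfolding strictly_upper_triangular_def add_col_def by (metis order.strict_trans)

lemma strictly_upper_triangular_col_add_steps:
  "(col_add_step n)\<^sup>*\<^sup>* B B' \<Longrightarrow> strictly_upper_triangular n B \<Longrightarrow> strictly_upper_triangular n B'"
  by (induction rule: rtranclp_induct)
    (auto simp: col_add_step_def strictly_upper_triangular_add_col)

lemma boundary_matrix_strictly_upper_triangular:
  assumes "admissible_enumeration K P le M n \<sigma>"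
  shows "strictly_upper_triangular n (boundary_matrix n \<sigma>)"
proof -
  have "i < j" if "i \<in> {1..n}" "j \<in> {1..n}" "\<sigma> i \<subset> \<sigma> j" for i j
    using assms that unfolding admissible_enumeration_def by blast
  then show ?thesis
    by (fastforce simp: strictly_upper_triangular_def boundary_matrix_def codim1_face_def)
qed

lemma homogeneous_cong:
  assumes "\<And>x. B' x k = B x k"
  shows "homogeneous n \<sigma> P M B' k = homogeneous n \<sigma> P M B k"
  using low_cong[of B' k B n, OF assms] by (simp add: homogeneous_def)

definition avoids_homogeneous_lows ::
  "nat \<Rightarrow> (nat \<Rightarrow> 'v set) \<Rightarrow> 'p set \<Rightarrow> ('p \<Rightarrow> 'v set set) \<Rightarrow> z2mat \<Rightarrow> nat \<Rightarrow> bool" where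
  "avoids_homogeneous_lows n \<sigma> P M B j \<longleftrightarrow>
     (\<forall>x s. B x j \<longrightarrow> 1 \<le> s \<longrightarrow> s < j \<longrightarrow> homogeneous n \<sigma> P M B s \<longrightarrow> low n B s \<noteq> x)"

lemma avoids_homogeneous_lows_cong:
  assumes "\<And>x k. k \<le> j \<Longrightarrow> B' x k = B x k"
  shows "avoids_homogeneous_lows n \<sigma> P M B' j = avoids_homogeneous_lows n \<sigma> P M B j"
proof -
  have "homogeneous n \<sigma> P M B' s = homogeneous n \<sigma> P M B s \<and> low n B' s = low n B s"
    if "s < j" for s
    using that assms homogeneous_cong[of B' s B n \<sigma> P M] low_cong[of B' s B] by simp
  then show ?thesis using assms by (auto simp: avoids_homogeneous_lows_def)
qed

lemma homogeneous_lows_distinct: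
  assumes "avoids_homogeneous_lows n \<sigma> P M B k" "1 \<le> s" "s < k"
    and "homogeneous n \<sigma> P M B s" "homogeneous n \<sigma> P M B k"
  shows "low n B s \<noteq> low n B k"
  using assms low_entry[of n B k] unfolding avoids_homogeneous_lows_def homogeneous_def by blast

lemma conmat_inner_other_col:
  "conmat_inner n \<sigma> P M j B i B' \<Longrightarrow> k \<noteq> j \<Longrightarrow> B' x k = B x k"
  by (induction rule: conmat_inner.induct) (auto simp: add_col_def)

lemma conmat_inner_strictly_upper_triangular:
  "conmat_inner n \<sigma> P M j B i B' \<Longrightarrow> j \<le> n \<Longrightarrow> strictly_upper_triangular n B \<Longrightarrow>
    strictly_upper_triangular n B'"
  by (induction rule: conmat_inner.induct) (auto simp: strictly_upper_triangular_add_col)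

lemma conmat_inner_rows_above:
  "conmat_inner n \<sigma> P M j B i B' \<Longrightarrow> j \<le> n \<Longrightarrow> strictly_upper_triangular n B \<Longrightarrow> i < x \<Longrightarrow>
    B' x j = B x j"
proof (induction rule: conmat_inner.induct)
  case (add B i s B')
  have "\<not> B x s"
  proof
    assume "B x s"
    then have "x \<in> {1..n}" using strictly_upper_triangularD[OF add.prems(2)] by fastforce
    then show False using nonzero_col_low_ge[of x n B s] \<open>B x s\<close> add.hyps(5) add.prems(3) by simp
  qed
  then show ?case
    using add strictly_upper_triangular_add_col by (simp add: add_col_def)
qed auto

text \<open>An addition at row \<open>i + 1\<close> cancels that entry, because the added column has its low there.\<close>
lemma conmat_inner_clears_rows:
  "conmat_inner n \<sigma> P M j B i B' \<Longrightarrow> j \<le> n \<Longrightarrow> strictly_upper_triangular n B \<Longrightarrow>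
    1 \<le> x \<Longrightarrow> x \<le> i \<Longrightarrow> B' x j \<Longrightarrow> 1 \<le> s \<Longrightarrow> s < j \<Longrightarrow> homogeneous n \<sigma> P M B' s \<Longrightarrow>
    low n B' s \<noteq> x"
proof (induction arbitrary: x rule: conmat_inner.induct)
  case (skip B i B')
  show ?case
  proof (cases "x = Suc i")
    case True
    have "B' y s = B y s" for y using conmat_inner_other_col[OF skip.hyps(2)] skip.prems(7) by simp
    then have "homogeneous n \<sigma> P M B s \<and> low n B' s = low n B s"
      using homogeneous_cong[of B' s B n \<sigma> P M] low_cong[of B' s B] skip.prems(8) by simp
    moreover have "B (Suc i) j"
      using conmat_inner_rows_above[OF skip.hyps(2) skip.prems(1,2)] skip.prems(5) True by simp
    ultimately show ?thesis using skip.hyps(1) skip.prems(6,7) True by auto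
  next
    case False
    then show ?thesis using skip by simp
  qed
next
  case (add B i s' B')
  show ?case
  proof (cases "x = Suc i")
    case True
    have "B (Suc i) s'"
      using low_entry[of n B s'] add.hyps(4,5) by (simp add: homogeneous_def)
    then have "\<not> add_col B s' j (Suc i) j" using add.hyps(1) by (simp add: add_col_def)
    moreover have "B' (Suc i) j = add_col B s' j (Suc i) j"
      using conmat_inner_rows_above[OF add.hyps(6) add.prems(1)] add.hyps(2,3) add.prems
        strictly_upper_triangular_add_col by simp
    ultimately show ?thesis using add.prems(5) True by simp
  next
    case False
    then show ?thesis using add strictly_upper_triangular_add_col by simp
  qed
qed simp

lemma conmat_inner_avoids_homogeneous_lows:
  assumes "conmat_inner n \<sigma> P M j B (low n B j) B'" "j \<le> n" "strictly_upper_triangular n B"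
  shows "avoids_homogeneous_lows n \<sigma> P M B' j"
  unfolding avoids_homogeneous_lows_def
proof (intro allI impI)
  fix x s assume x: "B' x j" and s: "1 \<le> s" "s < j" "homogeneous n \<sigma> P M B' s"
  have "1 \<le> x"
    using strictly_upper_triangularD[OF conmat_inner_strictly_upper_triangular[OF assms] x] by simp
  show "low n B' s \<noteq> x"
  proof (cases "x \<le> low n B j")
    case True
    then show ?thesis using conmat_inner_clears_rows[OF assms(1-3) \<open>1 \<le> x\<close> _ x s] by simp
  next
    case False
    then have "B x j" using conmat_inner_rows_above[OF assms] x by simp
    then show ?thesis
      using False nonzero_col_low_ge[of x n B j] strictly_upper_triangularD[OF assms(3)]
      by fastforce
  qed
qed

lemma conmat_outer_strictly_upper_triangular:
  "conmat_outer n \<sigma> P M B j B' \<Longrightarrow> strictly_upper_triangular n B \<Longrightarrow> strictly_upper_triangular n B'"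
  by (induction rule: conmat_outer.induct) (auto intro: conmat_inner_strictly_upper_triangular)

lemma conmat_outer_avoids_homogeneous_lows:
  "conmat_outer n \<sigma> P M B j B' \<Longrightarrow> strictly_upper_triangular n B \<Longrightarrow>
    (\<And>k. k < j \<Longrightarrow> avoids_homogeneous_lows n \<sigma> P M B k) \<Longrightarrow> avoids_homogeneous_lows n \<sigma> P M B' k"
proof (induction rule: conmat_outer.induct)
  case (finished j B)
  show ?case
  proof (cases "k < j")
    case False
    then have "\<not> B x k" for x
      using finished.hyps strictly_upper_triangularD[OF finished.prems(1)] by fastforce
    then show ?thesis by (simp add: avoids_homogeneous_lows_def)
  qed (use finished.prems in simp)
next
  case (process j B B1 B')
  have "avoids_homogeneous_lows n \<sigma> P M B1 k" if "k < Suc j" for k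
  proof (cases "k = j")
    case True
    then show ?thesis
      using conmat_inner_avoids_homogeneous_lows process.hyps(1,2) process.prems(1) by simp
  next
    case False
    then have "B1 x k' = B x k'" if "k' \<le> k" for x k'
      using conmat_inner_other_col[OF process.hyps(2)] that \<open>k < Suc j\<close> by simp
    then show ?thesis
      using avoids_homogeneous_lows_cong[of k B1 B n \<sigma> P M] process.prems(2) False \<open>k < Suc j\<close>
      by simp
  qed
  then show ?case
    using process.IH conmat_inner_strictly_upper_triangular[OF process.hyps(2,1) process.prems(1)]
    by simp
qed

lemma conmat_reduction_avoids_homogeneous_lows:
  assumes "conmat_reduction n \<sigma> P M A Aout" "strictly_upper_triangular n A"
  shows "avoids_homogeneous_lows n \<sigma> P M Aout k"
proof -
  have "\<not> A x 0" for x using strictly_upper_triangularD[OF assms(2)] by fastforce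
  then have "avoids_homogeneous_lows n \<sigma> P M A k" if "k < 1" for k
    using that by (simp add: avoids_homogeneous_lows_def)
  then show ?thesis
    using conmat_outer_avoids_homogeneous_lows[OF assms(1)[unfolded conmat_reduction_def] assms(2)]
    by blast
qed

definition block_part :: "(nat \<Rightarrow> nat \<Rightarrow> bool) \<Rightarrow> z2mat \<Rightarrow> z2mat" where
  "block_part R B = (\<lambda>x k. B x k \<and> R x k)"

definition block_pivot :: "nat \<Rightarrow> (nat \<Rightarrow> nat \<Rightarrow> bool) \<Rightarrow> z2mat \<Rightarrow> nat \<Rightarrow> bool" where
  "block_pivot n R B k \<longleftrightarrow> nonzero_col n B k \<and> R (low n B k) k"

locale convex_blocks =
  fixes n :: nat and R :: "nat \<Rightarrow> nat \<Rightarrow> bool"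
  assumes block_sym: "R i k \<Longrightarrow> R k i"
    and block_trans: "R i k \<Longrightarrow> R k l \<Longrightarrow> R i l"
    and block_convex: "1 \<le> i \<Longrightarrow> i \<le> m \<Longrightarrow> m \<le> k \<Longrightarrow> k \<le> n \<Longrightarrow> R i k \<Longrightarrow> R m k"
begin

lemma block_pivot_block_part:
  assumes "strictly_upper_triangular n B" "block_pivot n R B k"
  shows "nonzero_col n (block_part R B) k \<and> low n (block_part R B) k = low n B k"
proof -
  have "low n B k \<in> {1..n}" "block_part R B (low n B k) k"
    using assms(2) low_entry[of n B k] by (auto simp: block_pivot_def block_part_def)
  moreover have "y \<le> low n B k" if "y \<in> {1..n}" "block_part R B y k" for y
    using that nonzero_col_low_ge[of y n B k] by (simp add: block_part_def)
  ultimately show ?thesis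
    using nonzero_col_low_ge[of "low n B k" n "block_part R B" k]
      low_eqI[of "low n B k" n "block_part R B" k] by simp
qed

lemma nonzero_block_part_iff:
  assumes "strictly_upper_triangular n B"
  shows "nonzero_col n (block_part R B) k \<longleftrightarrow> block_pivot n R B k"
proof
  assume "nonzero_col n (block_part R B) k"
  then obtain x where x: "x \<in> {1..n}" "B x k" "R x k"
    by (auto simp: nonzero_col_def block_part_def)
  then have nz: "nonzero_col n B k" and "x \<le> low n B k" using nonzero_col_low_ge by blast+
  moreover have "low n B k \<le> k" "k \<le> n"
    using strictly_upper_triangularD[OF assms] low_entry[OF nz] by fastforce+
  ultimately show "block_pivot n R B k"
    using block_convex x by (auto simp: block_pivot_def)
qed (use block_pivot_block_part[OF assms] in blast)

lemma reduced_block_part: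
  assumes "strictly_upper_triangular n B"
    and "\<And>j k. j \<in> {1..n} \<Longrightarrow> k \<in> {1..n} \<Longrightarrow> j \<noteq> k \<Longrightarrow> block_pivot n R B j \<Longrightarrow>
           block_pivot n R B k \<Longrightarrow> low n B j \<noteq> low n B k"
  shows "reduced n (block_part R B)"
  unfolding reduced_def
proof (intro ballI impI)
  fix j k assume jk: "j \<in> {1..n}" "k \<in> {1..n}"
    and "j \<noteq> k \<and> nonzero_col n (block_part R B) j \<and> nonzero_col n (block_part R B) k"
  then have "j \<noteq> k" "block_pivot n R B j" "block_pivot n R B k"
    using nonzero_block_part_iff[OF assms(1)] by auto
  then show "low n (block_part R B) j \<noteq> low n (block_part R B) k"
    using assms(2)[OF jk] block_pivot_block_part[OF assms(1)] by simp
qed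

text \<open>Adding a column from another block changes no block entry: by convexity its entries
  lie in rows outside the target block.\<close>
lemma block_part_add_col:
  assumes "strictly_upper_triangular n B" "1 \<le> s" "s < j" "j \<le> n"
  shows "block_part R (add_col B s j) =
    (if R s j then add_col (block_part R B) s j else block_part R B)"
proof (cases "R s j")
  case True
  then have "R x j \<longleftrightarrow> R x s" for x
    using block_trans[of x s j] block_trans[of x j s] block_sym[of s j] by blast
  then show ?thesis using True by (auto simp: block_part_def add_col_def fun_eq_iff)
next
  case False
  have "\<not> (B x s \<and> R x j)" for x
    using strictly_upper_triangularD[OF assms(1), of x s] block_convex[of x s j] assms(3,4) False
    by auto
  then show ?thesis using False by (auto simp: block_part_def add_col_def fun_eq_iff)
qed

lemma block_part_col_add_steps:
  assumes "(col_add_step n)\<^sup>*\<^sup>* B B'" "strictly_upper_triangular n B"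
  shows "(col_add_step n)\<^sup>*\<^sup>* (block_part R B) (block_part R B')"
  using assms(1)
proof (induction rule: rtranclp_induct)
  case (step B1 B2)
  obtain s j where sj: "1 \<le> s" "s < j" "j \<le> n" and B2: "B2 = add_col B1 s j"
    using step.hyps(2) by (auto simp: col_add_step_def)
  have "strictly_upper_triangular n B1"
    using strictly_upper_triangular_col_add_steps[OF step.hyps(1) assms(2)] .
  then have "block_part R B2 = block_part R B1 \<or> col_add_step n (block_part R B1) (block_part R B2)"
    using block_part_add_col[OF _ sj] sj by (auto simp: B2 col_add_step_def)
  then show ?case using step.IH by auto
qed simp

lemma block_pivot_col_add_steps:
  assumes "strictly_upper_triangular n B" "(col_add_step n)\<^sup>*\<^sup>* B B'" "reduced n B'"
    and "\<And>j k. j \<in> {1..n} \<Longrightarrow> k \<in> {1..n} \<Longrightarrow> j \<noteq> k \<Longrightarrow> block_pivot n R B j \<Longrightarrow>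
           block_pivot n R B k \<Longrightarrow> low n B j \<noteq> low n B k"
    and "k \<in> {1..n}"
  shows "block_pivot n R B' k \<longleftrightarrow> block_pivot n R B k"
proof -
  have B': "strictly_upper_triangular n B'"
    using strictly_upper_triangular_col_add_steps assms(2,1) .
  have "reduced n (block_part R B')"
    using reduced_block_part[OF B'] assms(3) by (auto simp: reduced_def block_pivot_def)
  moreover have "reduced n (block_part R B)" using reduced_block_part assms(1,4) .
  ultimately have "nonzero_col n (block_part R B') k \<longleftrightarrow> nonzero_col n (block_part R B) k"
    using reduced_col_add_steps_same_pivots block_part_col_add_steps[OF assms(2,1)] assms(5)
    by blast
  then show ?thesis using nonzero_block_part_iff B' assms(1) by simp
qed

end

definition same_morse_set :: "(nat \<Rightarrow> 'v set) \<Rightarrow> 'p set \<Rightarrow> ('p \<Rightarrow> 'v set set) \<Rightarrow> nat \<Rightarrow> nat \<Rightarrow> bool" where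
  "same_morse_set \<sigma> P M i k \<longleftrightarrow> (\<exists>p\<in>P. \<sigma> i \<in> M p \<and> \<sigma> k \<in> M p)"

lemma homogeneous_eq_block_pivot:
  "homogeneous n \<sigma> P M B k \<longleftrightarrow> block_pivot n (same_morse_set \<sigma> P M) B k"
  by (auto simp: homogeneous_def block_pivot_def same_morse_set_def)

lemma convex_blocks_same_morse_set:
  assumes "morse_decomposition K \<V> P le M" "admissible_enumeration K P le M n \<sigma>"
  shows "convex_blocks n (same_morse_set \<sigma> P M)"
proof
  have M_disjoint: "\<forall>p\<in>P. \<forall>q\<in>P. p \<noteq> q \<longrightarrow> M p \<inter> M q = {}"
    and M_cover: "(\<Union>p\<in>P. M p) = K"
    using assms(1) by (simp_all add: morse_decomposition_def)
  show "same_morse_set \<sigma> P M k i" if "same_morse_set \<sigma> P M i k" for i k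
    using that by (auto simp: same_morse_set_def)
  show "same_morse_set \<sigma> P M i l"
    if ik: "same_morse_set \<sigma> P M i k" and kl: "same_morse_set \<sigma> P M k l" for i k l
  proof -
    obtain p q where "p \<in> P" "\<sigma> i \<in> M p" "\<sigma> k \<in> M p" "q \<in> P" "\<sigma> k \<in> M q" "\<sigma> l \<in> M q"
      using ik kl unfolding same_morse_set_def by blast
    moreover from this have "p = q" using M_disjoint by blast
    ultimately show ?thesis by (auto simp: same_morse_set_def)
  qed
  fix i m k assume ik: "1 \<le> i" "i \<le> m" "m \<le> k" "k \<le> n" and "same_morse_set \<sigma> P M i k"
  then obtain p where p: "p \<in> P" "\<sigma> i \<in> M p" "\<sigma> k \<in> M p" by (auto simp: same_morse_set_def)
  obtain lin where lin: "linear_extension P le lin"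
    and mono: "\<forall>i\<in>{1..n}. \<forall>j\<in>{1..n}. \<forall>p\<in>P. \<forall>q\<in>P. i \<le> j \<and> \<sigma> i \<in> M p \<and> \<sigma> j \<in> M q \<longrightarrow> lin p q"
    using assms(2) unfolding admissible_enumeration_def by blast
  have "\<sigma> m \<in> K" using assms(2) ik by (auto simp: admissible_enumeration_def bij_betw_def)
  then obtain q where q: "q \<in> P" "\<sigma> m \<in> M q" using M_cover by blast
  have "i \<in> {1..n}" "m \<in> {1..n}" "k \<in> {1..n}" using ik by auto
  then have "lin p q" "lin q p"
    using mono[rule_format, of i m p q] mono[rule_format, of m k q p] p q ik by simp_all
  then have "p = q"
    using lin p(1) q(1) unfolding linear_extension_def partial_order_on'_def by blast
  then show "same_morse_set \<sigma> P M m k" using p q by (auto simp: same_morse_set_def)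
qed

theorem proposition3:
  fixes K :: "'v set set" and \<V> :: "'v set set set"
    and P :: "'p set" and le :: "'p \<Rightarrow> 'p \<Rightarrow> bool" and M :: "'p \<Rightarrow> 'v set set"
    and n :: nat and \<sigma> :: "nat \<Rightarrow> 'v set" and Aout Abar :: z2mat
  assumes "simplicial_complex K"
    and "multivector_field K \<V>"
    and "morse_decomposition K \<V> P le M"
    and "admissible_enumeration K P le M n \<sigma>"
    and "conmat_reduction n \<sigma> P M (boundary_matrix n \<sigma>) Aout"
    and "complete_column_reduction n Aout Abar"
    and "j \<in> {1..n}"
  shows "homogeneous n \<sigma> P M Aout j \<longleftrightarrow> homogeneous n \<sigma> P M Abar j"
proof -
  interpret convex_blocks n "same_morse_set \<sigma> P M"
    using convex_blocks_same_morse_set assms(3,4) .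
  have A: "strictly_upper_triangular n (boundary_matrix n \<sigma>)"
    using boundary_matrix_strictly_upper_triangular assms(4) .
  have Aout: "strictly_upper_triangular n Aout"
    using conmat_outer_strictly_upper_triangular A assms(5) unfolding conmat_reduction_def by blast
  have avoids: "avoids_homogeneous_lows n \<sigma> P M Aout k" for k
    using conmat_reduction_avoids_homogeneous_lows assms(5) A .
  have "low n Aout s \<noteq> low n Aout k"
    if "s \<in> {1..n}" "k \<in> {1..n}" "s \<noteq> k"
      and "homogeneous n \<sigma> P M Aout s" "homogeneous n \<sigma> P M Aout k" for s k
  proof (cases "s < k")
    case True
    then show ?thesis using homogeneous_lows_distinct[OF avoids] that by simp
  next
    case False
    then have "k < s" using that(3) by simp
    then show ?thesis using homogeneous_lows_distinct[OF avoids] that by fastforce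
  qed
  then show ?thesis
    using block_pivot_col_add_steps[OF Aout] assms(6,7)
    by (simp add: complete_column_reduction_def homogeneous_eq_block_pivot)
qed

end
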